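(* Let $b$ and $c$ be integers with $b > c > 1$, let $m = 2b+c$, and let $f(x) = x^{2b+c} + x^{b+c} + x^{b} + x^{c} + 1 \in \mathbb{F}_2[x]$. There is a fixed, input-independent straight-line program using no AND operations and exactly $6b+3c-2 = 3m-2$ two-input XOR operations, of XOR depth $3$ (i.e. time delay $3T_X$), which, on input the coefficient bits $d_0,\dots,d_{2m-2}$ of an arbitrary polynomial $D(x)=\sum_{i=0}^{2m-2} d_i x^i \in \mathbb{F}_2[x]$ of degree at most $2m-2$, outputs the $m$ coefficient bits of the remainder of $D$ upon division by $f$ (the unique polynomial of degree less than $m$ congruent to $D$ modulo $f$).
   Context: A straight-line program (bit-parallel circuit) over $\mathbb{F}_2$ here is a sequence of gates, each computing the XOR (sum in $\mathbb{F}_2$) of two values that are either input bits or outputs of earlier gates; each output bit is an input bit or a gate output. The number of XOR operations is the number of gates. $T_X$ denotes the delay of one 2-input XOR gate, and the time delay of the program is $T_X$ times the maximum number of gates on any path from an input to an output. *)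

theory Defs
  imports "HOL-Library.Z2" "HOL-Computational_Algebra.Polynomial"
begin

(* A straight-line XOR program on n input bits is a list of gates; gate k is a pair (i,j)
   of wire indices, where wires 0..n-1 are the inputs and wire n+k is the output of gate k.
   Gate k computes wire i XOR wire j (addition in F_2 = type bit). *)
type_synonym gate = "nat \<times> nat"

definition slp_wf :: "nat \<Rightarrow> gate list \<Rightarrow> nat list \<Rightarrow> bool" where
  "slp_wf n gs outs \<longleftrightarrow>
     (\<forall>k < length gs. fst (gs ! k) < n + k \<and> snd (gs ! k) < n + k) \<and>
     (\<forall>w \<in> set outs. w < n + length gs)"

definition slp_wires :: "nat \<Rightarrow> (nat \<Rightarrow> bit) \<Rightarrow> gate list \<Rightarrow> bit list" where
  "slp_wires n x gs =
     foldl (\<lambda>vs g. vs @ [vs ! fst g + vs ! snd g]) (map x [0..<n]) gs"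

definition slp_depths :: "nat \<Rightarrow> gate list \<Rightarrow> nat list" where
  "slp_depths n gs =
     foldl (\<lambda>ds g. ds @ [Suc (max (ds ! fst g) (ds ! snd g))]) (replicate n 0) gs"

definition slp_depth :: "nat \<Rightarrow> gate list \<Rightarrow> nat list \<Rightarrow> nat" where
  "slp_depth n gs outs = Max (set (map (\<lambda>w. slp_depths n gs ! w) outs))"

definition slp_outputs :: "nat \<Rightarrow> (nat \<Rightarrow> bit) \<Rightarrow> gate list \<Rightarrow> nat list \<Rightarrow> bit list" where
  "slp_outputs n x gs outs = map (\<lambda>w. slp_wires n x gs ! w) outs"

definition pentanomial :: "nat \<Rightarrow> nat \<Rightarrow> bit poly" where
  "pentanomial b c = monom 1 (2*b+c) + monom 1 (b+c) + monom 1 b + monom 1 c + 1"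

end

theory Submission
  imports Defs
begin

text \<open>
  Write \<open>h y = d (m + y)\<close> (\<open>y \<le> m - 2\<close>) for the upper coefficients of the dividend
  \<open>D\<close>. The quotient of \<open>D\<close> by \<open>f\<close> is \<open>\<Sum>t. q t x\<^sup>t\<close> with
  \<open>q t = h t + h (t + b) + h (t + b + c)\<close>, as one checks coefficientwise, so remainder bit
  \<open>k\<close> is \<open>d k + q k + q (k - c) + q (k - b) + q (k - b - c)\<close>. After cancellation this is
  \<open>d k\<close> plus two or three terms, each a single bit \<open>h y\<close> or a sum
  \<open>K y = h y + h (y + b + c)\<close>. A first layer of \<open>b - 1\<close> gates computes the \<open>K y\<close> that
  are not input bits themselves; then every output is a balanced XOR tree of depth 2 over
  three terms (\<open>b + 1\<close> outputs, 2 gates each) or four terms (\<open>b + c - 1\<close> outputs,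
  3 gates each). This gives \<open>(b - 1) + 2 (b + 1) + 3 (b + c - 1) = 3m - 2\<close> gates and depth 3.
\<close>

definition gate_fold :: "('a \<Rightarrow> 'a \<Rightarrow> 'a) \<Rightarrow> 'a list \<Rightarrow> gate list \<Rightarrow> 'a list" where
  "gate_fold f vs gs = foldl (\<lambda>vs g. vs @ [f (vs ! fst g) (vs ! snd g)]) vs gs"

lemma slp_wires_eq_gate_fold: "slp_wires n x gs = gate_fold (+) (map x [0..<n]) gs"
  by (simp add: slp_wires_def gate_fold_def)

lemma slp_depths_eq_gate_fold:
  "slp_depths n gs = gate_fold (\<lambda>a b. Suc (max a b)) (replicate n 0) gs"
  by (simp add: slp_depths_def gate_fold_def)

lemma gate_fold_Nil [simp]: "gate_fold f vs [] = vs"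
  by (simp add: gate_fold_def)

lemma gate_fold_Cons [simp]:
  "gate_fold f vs (g # gs) = gate_fold f (vs @ [f (vs ! fst g) (vs ! snd g)]) gs"
  by (simp add: gate_fold_def)

lemma gate_fold_append: "gate_fold f vs (gs @ hs) = gate_fold f (gate_fold f vs gs) hs"
  by (simp add: gate_fold_def)

lemma length_gate_fold [simp]: "length (gate_fold f vs gs) = length vs + length gs"
  by (induction gs arbitrary: vs) simp_all

lemma nth_gate_fold_prefix: "w < length vs \<Longrightarrow> gate_fold f vs gs ! w = vs ! w"
  by (induction gs arbitrary: vs) (simp_all add: nth_append)

definition gates_wf :: "nat \<Rightarrow> gate list \<Rightarrow> bool" where
  "gates_wf n gs \<longleftrightarrow> (\<forall>k < length gs. fst (gs ! k) < n + k \<and> snd (gs ! k) < n + k)"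

lemma slp_wf_iff: "slp_wf n gs outs \<longleftrightarrow> gates_wf n gs \<and> (\<forall>w \<in> set outs. w < n + length gs)"
  by (simp add: slp_wf_def gates_wf_def)

lemma all_nth_append:
  "(\<forall>k < length (xs @ ys). P k ((xs @ ys) ! k)) \<longleftrightarrow>
     (\<forall>k < length xs. P k (xs ! k)) \<and> (\<forall>k < length ys. P (length xs + k) (ys ! k))"
proof (intro iffI conjI allI impI)
  fix k assume "\<forall>k < length (xs @ ys). P k ((xs @ ys) ! k)"
  then show "k < length xs \<Longrightarrow> P k (xs ! k)" "k < length ys \<Longrightarrow> P (length xs + k) (ys ! k)"
    by (auto simp: nth_append dest: spec[of _ k] spec[of _ "length xs + k"])
next
  fix k assume "(\<forall>k < length xs. P k (xs ! k)) \<and> (\<forall>k < length ys. P (length xs + k) (ys ! k))"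
    and "k < length (xs @ ys)"
  then show "P k ((xs @ ys) ! k)"
    by (cases "k < length xs") (auto simp: nth_append dest: spec[of _ "k - length xs"])
qed

lemma gates_wf_append:
  "gates_wf n (gs @ hs) \<longleftrightarrow> gates_wf n gs \<and> gates_wf (n + length gs) hs"
  unfolding gates_wf_def all_nth_append[where P = "\<lambda>k g. fst g < n + k \<and> snd g < n + k"]
  by (simp add: add.assoc)

fun tree_fold :: "('a \<Rightarrow> 'a \<Rightarrow> 'a) \<Rightarrow> 'a list \<Rightarrow> 'a" where
  "tree_fold f [u, v] = f u v"
| "tree_fold f [u, v, w] = f (f u v) w"
| "tree_fold f [u, v, w, z] = f (f u v) (f w z)"
| "tree_fold f _ = undefined"

fun xor_tree_gates :: "nat \<Rightarrow> nat list \<Rightarrow> gate list" where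
  "xor_tree_gates p [u, v] = [(u, v)]"
| "xor_tree_gates p [u, v, w] = [(u, v), (p, w)]"
| "xor_tree_gates p [u, v, w, z] = [(u, v), (w, z), (p, Suc p)]"
| "xor_tree_gates p _ = []"

definition tree_sized :: "'a list \<Rightarrow> bool" where
  "tree_sized s \<longleftrightarrow> length s \<in> {2, 3, 4}"

lemma tree_sized_cases:
  assumes "tree_sized s"
  obtains u v where "s = [u, v]" | u v w where "s = [u, v, w]" | u v w z where "s = [u, v, w, z]"
  using assms unfolding tree_sized_def
  by (auto simp: length_Suc_conv numeral_eq_Suc)

lemma length_xor_tree_gates: "tree_sized s \<Longrightarrow> length (xor_tree_gates p s) = length s - 1"
  by (erule tree_sized_cases) simp_all

lemma gates_wf_xor_tree_gates:
  "tree_sized s \<Longrightarrow> \<forall>w \<in> set s. w < p \<Longrightarrow> gates_wf p (xor_tree_gates p s)"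
  by (erule tree_sized_cases) (auto simp: gates_wf_def less_Suc_eq)

lemma gate_fold_xor_tree_gates:
  fixes f :: "'a \<Rightarrow> 'a \<Rightarrow> 'a" and post :: "gate list"
  assumes "tree_sized s" "\<forall>w \<in> set s. w < p" "p = length vs + length pre"
  defines "V \<equiv> gate_fold f vs (pre @ xor_tree_gates p s @ post)"
  shows "V ! (p + length s - 2) = tree_fold f (map (\<lambda>w. V ! w) s)"
proof -
  define W where "W = gate_fold f vs pre"
  have len: "length W = p" using assms(3) by (simp add: W_def)
  have V: "V = gate_fold f (gate_fold f W (xor_tree_gates p s)) post"
    by (simp add: V_def W_def gate_fold_append)
  have "V ! w = W ! w" if "w < p" for w
    using that len by (simp add: V nth_gate_fold_prefix nth_append)
  with assms(1,2) show ?thesis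
    by (cases rule: tree_sized_cases) (simp_all add: V nth_gate_fold_prefix nth_append len)
qed

fun xor_trees :: "nat \<Rightarrow> nat list list \<Rightarrow> gate list" where
  "xor_trees p [] = []"
| "xor_trees p (s # ss) = xor_tree_gates p s @ xor_trees (p + length s - 1) ss"

fun xor_tree_outs :: "nat \<Rightarrow> nat list list \<Rightarrow> nat list" where
  "xor_tree_outs p [] = []"
| "xor_tree_outs p (s # ss) = (p + length s - 2) # xor_tree_outs (p + length s - 1) ss"

lemma length_xor_tree_outs [simp]: "length (xor_tree_outs p ss) = length ss"
  by (induction ss arbitrary: p) simp_all

lemma length_xor_trees:
  "\<forall>s \<in> set ss. tree_sized s \<Longrightarrow> length (xor_trees p ss) = (\<Sum>s\<leftarrow>ss. length s - 1)"
  by (induction ss arbitrary: p) (simp_all add: length_xor_tree_gates)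

lemma xor_tree_outs_less:
  assumes "\<forall>s \<in> set ss. tree_sized s" "w \<in> set (xor_tree_outs p ss)"
  shows "w < p + length (xor_trees p ss)"
  using assms
proof (induction ss arbitrary: p)
  case (Cons s ss)
  then have "2 \<le> length s" by (auto simp: tree_sized_def)
  with Cons show ?case by (force simp: length_xor_tree_gates)
qed simp

lemma nth_xor_tree_outs_pairs:
  "\<forall>s \<in> set ss. length s = 2 \<Longrightarrow> j < length ss \<Longrightarrow> xor_tree_outs p ss ! j = p + j"
  by (induction ss arbitrary: p j) (auto simp: nth_Cons split: nat.split)

lemma gates_wf_xor_trees:
  "\<forall>s \<in> set ss. tree_sized s \<and> (\<forall>w \<in> set s. w < p) \<Longrightarrow> gates_wf p (xor_trees p ss)"
proof (induction ss arbitrary: p)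
  case (Cons s ss)
  then have "2 \<le> length s" by (auto simp: tree_sized_def)
  then have "gates_wf (p + length s - 1) (xor_trees (p + length s - 1) ss)"
    using Cons by (intro Cons.IH) fastforce
  with Cons.prems \<open>2 \<le> length s\<close> show ?case
    by (simp add: gates_wf_append gates_wf_xor_tree_gates length_xor_tree_gates)
qed (simp add: gates_wf_def)

lemma gate_fold_xor_trees:
  fixes f :: "'a \<Rightarrow> 'a \<Rightarrow> 'a" and post :: "gate list"
  assumes "\<forall>s \<in> set ss. tree_sized s \<and> (\<forall>w \<in> set s. w < p)" "p = length vs + length pre"
    "j < length ss"
  defines "V \<equiv> gate_fold f vs (pre @ xor_trees p ss @ post)"
  shows "V ! (xor_tree_outs p ss ! j) = tree_fold f (map (\<lambda>w. V ! w) (ss ! j))"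
  unfolding V_def using assms(1-3)
proof (induction ss arbitrary: p pre j)
  case (Cons s ss)
  then have s: "tree_sized s" "\<forall>w \<in> set s. w < p" by auto
  show ?case
  proof (cases j)
    case 0
    with s Cons.prems(2) show ?thesis
      by (simp add: gate_fold_xor_tree_gates)
  next
    case (Suc i)
    have "2 \<le> length s" using s by (auto simp: tree_sized_def)
    then have "\<forall>s' \<in> set ss. tree_sized s' \<and> (\<forall>w \<in> set s'. w < p + length s - 1)"
      using Cons.prems(1) by fastforce
    from Cons.IH[OF this, of "pre @ xor_tree_gates p s" i] Suc Cons.prems(2,3) s(1)
      \<open>2 \<le> length s\<close>
    show ?thesis by (simp add: length_xor_tree_gates add.assoc)
  qed
qed simp

lemma tree_fold_plus:
  "tree_sized xs \<Longrightarrow> tree_fold (+) xs = sum_list (xs :: 'a :: monoid_add list)"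
  by (erule tree_sized_cases) (simp_all add: add.assoc)

lemma tree_fold_depth_le:
  "tree_sized ds \<Longrightarrow> \<forall>d \<in> set ds. d \<le> D \<Longrightarrow> tree_fold (\<lambda>a b. Suc (max a b)) ds \<le> D + 2"
  by (erule tree_sized_cases) auto

text \<open>Sums of bits are to be normalised with \<open>add_ac\<close> and cancelled pairwise, not turned
  into \<open>XOR\<close> terms.\<close>
declare add_bit_eq_xor [simp del]

lemma bit_add_self [simp]: "x + x = (0 :: bit)"
  by (simp add: add_bit_eq_xor)

lemma coeff_sum_monom: "coeff (\<Sum>i<n. monom (a i) i) k = (if k < n then a k else 0)"
  by (simp add: coeff_sum coeff_monom)

locale pentanomial_reduction =
  fixes b c :: nat
  assumes c_less_b: "c < b" and one_less_c: "1 < c"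
begin

abbreviation m :: nat where "m \<equiv> 2*b + c"

text \<open>
  Wire \<open>k < 2m - 1\<close> carries input bit \<open>d k\<close>, so wire \<open>m + y\<close> carries \<open>h y\<close>.
  \<open>K_wire y\<close> carries \<open>K y = h y + h (y + b + c)\<close>: it is a first-layer gate if
  \<open>y < b - 1\<close>, and otherwise the input wire \<open>m + y\<close>, as then \<open>h (y + b + c) = 0\<close>.
\<close>
definition K_wire :: "nat \<Rightarrow> nat" where
  "K_wire y = (if y < b - 1 then 2*m - 1 + y else m + y)"

definition K_specs :: "nat list list" where
  "K_specs = map (\<lambda>y. [m + y, m + y + b + c]) [0..<b - 1]"

definition output_spec :: "nat \<Rightarrow> nat list" where
  "output_spec k =
     (if k < c then [k, m + (k + b), K_wire k]
      else if k < b then [k, m + (k - c), m + (k + b - c), K_wire k]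
      else if k < b + c then [k, m + (k - c), m + (k + b - c), K_wire (k - b)]
      else if k < b + 2*c - 1 then [k, m + (k + b - c), K_wire (k - b), K_wire (k - b - c)]
      else [k, K_wire (k - b), K_wire (k - b - c)])"

definition reduction_gates :: "gate list" where
  "reduction_gates =
     xor_trees (2*m - 1) K_specs @ xor_trees (2*m - 1 + (b - 1)) (map output_spec [0..<m])"

definition reduction_outs :: "nat list" where
  "reduction_outs = xor_tree_outs (2*m - 1 + (b - 1)) (map output_spec [0..<m])"

lemma K_wire_less: "y + 2 \<le> m \<Longrightarrow> K_wire y < 2*m - 1 + (b - 1)"
  using c_less_b by (auto simp: K_wire_def)

lemma output_spec_wf:
  assumes "k < m"
  shows "tree_sized (output_spec k)" "\<forall>w \<in> set (output_spec k). w < 2*m - 1 + (b - 1)"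
proof -
  have "K_wire y < 2*m - 1 + (b - 1)" if "y + 2 \<le> m" for y
    using that by (rule K_wire_less)
  with assms c_less_b one_less_c
  show "tree_sized (output_spec k)" "\<forall>w \<in> set (output_spec k). w < 2*m - 1 + (b - 1)"
    by (auto simp: output_spec_def tree_sized_def)
qed

lemma K_specs_wf: "\<forall>s \<in> set K_specs. tree_sized s \<and> (\<forall>w \<in> set s. w < 2*m - 1)"
  by (auto simp: K_specs_def tree_sized_def)

lemma output_specs_wf:
  "\<forall>s \<in> set (map output_spec [0..<m]). tree_sized s \<and> (\<forall>w \<in> set s. w < 2*m - 1 + (b - 1))"
  using output_spec_wf by auto

lemma length_output_spec:
  "length (output_spec k) = (if c \<le> k \<and> k < b + 2*c - 1 then 4 else 3)"
  using one_less_c by (auto simp: output_spec_def)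

lemma length_reduction_gates: "length reduction_gates = 3*m - 2"
proof -
  have split: "[0..<m] = [0..<c] @ [c..<b + 2*c - 1] @ [b + 2*c - 1..<m]"
    using upt_add_eq_append[of 0 c "m - c"] upt_add_eq_append[of c "b + 2*c - 1" "b - c + 1"]
      c_less_b one_less_c by (simp add: add.commute)
  have "length (xor_trees (2*m - 1 + (b - 1)) (map output_spec [0..<m]))
      = (\<Sum>k\<leftarrow>[0..<m]. length (output_spec k) - 1)"
    using output_spec_wf by (simp add: length_xor_trees o_def)
  also have "\<dots> = 2*c + 3*(b + c - 1) + 2*(b - c + 1)"
  proof -
    have pieces: "map (\<lambda>k. length (output_spec k) - 1) [0..<c] = map (\<lambda>_. 2) [0..<c]"
      "map (\<lambda>k. length (output_spec k) - 1) [c..<b + 2*c - 1] = map (\<lambda>_. 3) [c..<b + 2*c - 1]"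
      "map (\<lambda>k. length (output_spec k) - 1) [b + 2*c - 1..<m] = map (\<lambda>_. 2) [b + 2*c - 1..<m]"
      using c_less_b by (auto simp: length_output_spec)
    show ?thesis
      unfolding split map_append sum_list_append pieces sum_list_triv length_upt
      using c_less_b by simp
  qed
  finally show ?thesis
    using c_less_b one_less_c
    by (simp add: reduction_gates_def K_specs_def length_xor_trees tree_sized_def o_def sum_list_triv)
qed

lemma length_reduction_outs: "length reduction_outs = m"
  by (simp add: reduction_outs_def)

lemma slp_wf_reduction: "slp_wf (2*m - 1) reduction_gates reduction_outs"
proof -
  have "gates_wf (2*m - 1) (xor_trees (2*m - 1) K_specs)"
    using K_specs_wf by (rule gates_wf_xor_trees)
  moreover have "gates_wf (2*m - 1 + (b - 1)) (xor_trees (2*m - 1 + (b - 1)) (map output_spec [0..<m]))"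
    using output_specs_wf by (rule gates_wf_xor_trees)
  moreover have "w < 2*m - 1 + (b - 1) + length (xor_trees (2*m - 1 + (b - 1)) (map output_spec [0..<m]))"
    if "w \<in> set reduction_outs" for w
    using output_specs_wf that unfolding reduction_outs_def
    by (intro xor_tree_outs_less) auto
  ultimately show ?thesis
    using K_specs_wf
    by (simp add: slp_wf_iff reduction_gates_def gates_wf_append length_xor_trees K_specs_def o_def
        sum_list_triv add.assoc)
qed

lemma gate_fold_reduction_first_layer:
  fixes f :: "'a \<Rightarrow> 'a \<Rightarrow> 'a"
  assumes "length vs = 2*m - 1" "w < 2*m - 1 + (b - 1)"
  shows "gate_fold f vs reduction_gates ! w =
    (if w < 2*m - 1 then vs ! w else f (vs ! (w - (m - 1))) (vs ! (w - (m - 1) + b + c)))"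
proof (cases "w < 2*m - 1")
  case True
  then show ?thesis
    using assms(1) by (simp add: nth_gate_fold_prefix)
next
  case False
  define y where "y = w - (2*m - 1)"
  define V where "V = gate_fold f vs reduction_gates"
  have y: "y < b - 1" "w = 2*m - 1 + y" "w - (m - 1) = m + y"
    using False assms(2) by (auto simp: y_def)
  have "xor_tree_outs (2*m - 1) K_specs ! y = w"
    using y by (simp add: nth_xor_tree_outs_pairs K_specs_def)
  moreover have "K_specs ! y = [m + y, m + y + b + c]"
    using y by (simp add: K_specs_def)
  moreover have "V ! (xor_tree_outs (2*m - 1) K_specs ! y) = tree_fold f (map ((!) V) (K_specs ! y))"
    using gate_fold_xor_trees[OF K_specs_wf, of vs "[]" y] y assms(1)
    unfolding V_def reduction_gates_def by (simp add: K_specs_def)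
  moreover have "V ! (m + y) = vs ! (m + y)" "V ! (m + y + b + c) = vs ! (m + y + b + c)"
    using y assms(1) by (simp_all add: V_def nth_gate_fold_prefix)
  ultimately show ?thesis
    using False unfolding V_def[symmetric] y(3) by simp
qed

lemma gate_fold_reduction_outs:
  fixes f :: "'a \<Rightarrow> 'a \<Rightarrow> 'a"
  assumes "length vs = 2*m - 1" "k < m"
  defines "V \<equiv> gate_fold f vs reduction_gates"
  shows "V ! (reduction_outs ! k) = tree_fold f (map (\<lambda>w. V ! w) (output_spec k))"
  using gate_fold_xor_trees[OF output_specs_wf, of vs "xor_trees (2*m - 1) K_specs" _ f "[]"] assms
    K_specs_wf
  by (simp add: V_def reduction_gates_def reduction_outs_def length_xor_trees K_specs_def o_def
      sum_list_triv)

definition dividend :: "(nat \<Rightarrow> bit) \<Rightarrow> bit poly" where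
  "dividend d = (\<Sum>i<2*m - 1. monom (d i) i)"

definition quotient_coeff :: "(nat \<Rightarrow> bit) \<Rightarrow> nat \<Rightarrow> bit" where
  "quotient_coeff d t = coeff (dividend d) (m + t) + coeff (dividend d) (m + t + b)
     + coeff (dividend d) (m + t + b + c)"

definition quotient :: "(nat \<Rightarrow> bit) \<Rightarrow> bit poly" where
  "quotient d = (\<Sum>t<m. monom (quotient_coeff d t) t)"

lemma coeff_dividend: "coeff (dividend d) i = (if i < 2*m - 1 then d i else 0)"
  by (simp add: dividend_def coeff_sum_monom)

lemma coeff_quotient: "coeff (quotient d) t = quotient_coeff d t"
  by (auto simp: quotient_def coeff_sum_monom quotient_coeff_def coeff_dividend)

lemma coeff_quotient_mult_pentanomial:
  "coeff (quotient d * pentanomial b c) k =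
     quotient_coeff d k
     + (if b + c \<le> k then quotient_coeff d (k - (b + c)) else 0)
     + (if b \<le> k then quotient_coeff d (k - b) else 0)
     + (if c \<le> k then quotient_coeff d (k - c) else 0)
     + (if m \<le> k then quotient_coeff d (k - m) else 0)"
  by (simp add: pentanomial_def distrib_left mult.commute[of "quotient d"] coeff_monom_mult
      coeff_quotient add_ac)

lemma coeff_quotient_mult_pentanomial_high:
  "m \<le> k \<Longrightarrow> coeff (quotient d * pentanomial b c) k = coeff (dividend d) k"
  using c_less_b
  by (simp add: coeff_quotient_mult_pentanomial quotient_coeff_def coeff_dividend add_ac mult_2)

lemma degree_pentanomial: "degree (pentanomial b c) = m"
proof -
  have "coeff (pentanomial b c) k = (if k = m then 1 else 0)" if "m \<le> k" for k
    using that c_less_b by (simp add: pentanomial_def coeff_monom)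
  then show ?thesis
    by (intro antisym degree_le le_degree) auto
qed

lemma dividend_mod_pentanomial:
  "dividend d mod pentanomial b c = dividend d - quotient d * pentanomial b c"
proof -
  have "degree (dividend d - quotient d * pentanomial b c) < m"
  proof -
    have "degree (dividend d - quotient d * pentanomial b c) \<le> m - 1"
      using coeff_quotient_mult_pentanomial_high by (intro degree_le) auto
    then show ?thesis using c_less_b by linarith
  qed
  then have "(dividend d - quotient d * pentanomial b c) mod pentanomial b c
      = dividend d - quotient d * pentanomial b c"
    by (simp add: mod_poly_less degree_pentanomial)
  then show ?thesis
    by (simp add: mod_diff_eq[symmetric])
qed

definition wire_value :: "(nat \<Rightarrow> bit) \<Rightarrow> nat \<Rightarrow> bit" where
  "wire_value d w = (if w < 2*m - 1 then d w else d (w - (m - 1)) + d (w - (m - 1) + b + c))"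

lemma wire_value_K_wire:
  "y + 2 \<le> m \<Longrightarrow> wire_value d (K_wire y) = coeff (dividend d) (m + y) + coeff (dividend d) (m + y + b + c)"
  by (auto simp: wire_value_def K_wire_def coeff_dividend add_ac)

lemma wire_value_input: "w < 2*m - 1 \<Longrightarrow> wire_value d w = coeff (dividend d) w"
  by (simp add: wire_value_def coeff_dividend)

lemma coeff_dividend_mod_pentanomial:
  assumes "k < m"
  shows "coeff (dividend d mod pentanomial b c) k = (\<Sum>w\<leftarrow>output_spec k. wire_value d w)"
proof -
  have "coeff (dividend d mod pentanomial b c) k
      = coeff (dividend d) k + coeff (quotient d * pentanomial b c) k"
    by (simp add: dividend_mod_pentanomial)
  moreover consider "k < c" | "c \<le> k" "k < b" | "b \<le> k" "k < b + c" | "b + c \<le> k" "k < b + 2*c - 1"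
    | "b + 2*c - 1 \<le> k"
    by linarith
  then have "coeff (dividend d) k + coeff (quotient d * pentanomial b c) k
      = (\<Sum>w\<leftarrow>output_spec k. wire_value d w)"
    using assms c_less_b one_less_c
    by cases (auto simp: output_spec_def wire_value_K_wire wire_value_input
        coeff_quotient_mult_pentanomial quotient_coeff_def coeff_dividend add_ac mult_2)
  ultimately show ?thesis by simp
qed

lemma slp_wires_reduction_first_layer:
  "w < 2*m - 1 + (b - 1) \<Longrightarrow> slp_wires (2*m - 1) d reduction_gates ! w = wire_value d w"
  by (simp add: slp_wires_eq_gate_fold gate_fold_reduction_first_layer wire_value_def)

lemma slp_outputs_reduction:
  assumes "k < m"
  shows "slp_outputs (2*m - 1) d reduction_gates reduction_outs ! k
    = coeff (dividend d mod pentanomial b c) k"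
proof -
  let ?V = "slp_wires (2*m - 1) d reduction_gates"
  have "slp_outputs (2*m - 1) d reduction_gates reduction_outs ! k = ?V ! (reduction_outs ! k)"
    using assms by (simp add: slp_outputs_def length_reduction_outs)
  also have "\<dots> = tree_fold (+) (map (\<lambda>w. ?V ! w) (output_spec k))"
    using assms unfolding slp_wires_eq_gate_fold by (simp add: gate_fold_reduction_outs)
  also have "\<dots> = (\<Sum>w\<leftarrow>output_spec k. ?V ! w)"
    using output_spec_wf[OF assms] by (simp add: tree_fold_plus tree_sized_def)
  also have "\<dots> = (\<Sum>w\<leftarrow>output_spec k. wire_value d w)"
    using output_spec_wf(2)[OF assms] by (intro arg_cong[where f = sum_list] map_cong refl
        slp_wires_reduction_first_layer) blast
  also have "\<dots> = coeff (dividend d mod pentanomial b c) k"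
    using assms by (simp add: coeff_dividend_mod_pentanomial)
  finally show ?thesis .
qed

lemma slp_depths_reduction_first_layer:
  "w < 2*m - 1 + (b - 1) \<Longrightarrow> slp_depths (2*m - 1) reduction_gates ! w = (if w < 2*m - 1 then 0 else 1)"
  by (simp add: slp_depths_eq_gate_fold gate_fold_reduction_first_layer)

lemma slp_depths_reduction_outs:
  assumes "k < m"
  shows "slp_depths (2*m - 1) reduction_gates ! (reduction_outs ! k)
    = tree_fold (\<lambda>a b. Suc (max a b)) (map (\<lambda>w. if w < 2*m - 1 then 0 else 1) (output_spec k))"
proof -
  have "slp_depths (2*m - 1) reduction_gates ! (reduction_outs ! k)
    = tree_fold (\<lambda>a b. Suc (max a b)) (map (\<lambda>w. slp_depths (2*m - 1) reduction_gates ! w) (output_spec k))"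
    using assms unfolding slp_depths_eq_gate_fold by (simp add: gate_fold_reduction_outs)
  also have "\<dots> = tree_fold (\<lambda>a b. Suc (max a b)) (map (\<lambda>w. if w < 2*m - 1 then 0 else 1) (output_spec k))"
    using output_spec_wf(2)[OF assms] by (intro arg_cong[where f = "tree_fold _"] map_cong refl
        slp_depths_reduction_first_layer) blast
  finally show ?thesis .
qed

lemma slp_depth_reduction: "slp_depth (2*m - 1) reduction_gates reduction_outs = 3"
  unfolding slp_depth_def
proof (rule Max_eqI)
  fix t assume "t \<in> set (map (\<lambda>w. slp_depths (2*m - 1) reduction_gates ! w) reduction_outs)"
  then obtain k where k: "k < m" "t = slp_depths (2*m - 1) reduction_gates ! (reduction_outs ! k)"
    by (auto simp: in_set_conv_nth length_reduction_outs)
  have "tree_fold (\<lambda>a b. Suc (max a b)) (map (\<lambda>w. if w < 2*m - 1 then 0 else 1) (output_spec k)) \<le> 1 + 2"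
    using output_spec_wf(1)[OF k(1)] by (intro tree_fold_depth_le) (auto simp: tree_sized_def)
  then show "t \<le> 3"
    unfolding k(2) slp_depths_reduction_outs[OF k(1)] by simp
next
  have "b < m" "output_spec b = [b, m + (b - c), m + (2*b - c), K_wire 0]" "K_wire 0 = 2*m - 1"
    using c_less_b one_less_c by (auto simp: output_spec_def K_wire_def)
  then have "slp_depths (2*m - 1) reduction_gates ! (reduction_outs ! b) = 3"
    unfolding slp_depths_reduction_outs[OF \<open>b < m\<close>] by simp
  with \<open>b < m\<close> show "3 \<in> set (map (\<lambda>w. slp_depths (2*m - 1) reduction_gates ! w) reduction_outs)"
    unfolding set_map by (intro image_eqI[OF _ nth_mem]) (auto simp: length_reduction_outs)
qed simp

end

theorem theorem2:
  fixes b c :: nat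
  assumes "b > c" and "c > 1"
  defines "m \<equiv> 2*b + c"
  shows "\<exists>gs outs.
           slp_wf (2*m - 1) gs outs \<and>
           length outs = m \<and>
           length gs = 3*m - 2 \<and>
           slp_depth (2*m - 1) gs outs = 3 \<and>
           (\<forall>d :: nat \<Rightarrow> bit.
              \<forall>k < m. slp_outputs (2*m - 1) d gs outs ! k =
                       coeff ((\<Sum>i<2*m - 1. monom (d i) i) mod pentanomial b c) k)"
proof -
  interpret pentanomial_reduction b c
    using assms(1,2) by unfold_locales
  show ?thesis
    unfolding m_def
    using slp_wf_reduction length_reduction_outs length_reduction_gates slp_depth_reduction
      slp_outputs_reduction
    by (intro exI[of _ reduction_gates] exI[of _ reduction_outs]) (simp add: dividend_def)
qed

end
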